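(* Let $R$ be a ring. The following are equivalent: (i) $R$ is strongly nil-clean; (ii) ${\rm T}_n(R)$ is strongly weakly nil-clean for all $n \in \mathbb{N}$; (iii) ${\rm T}_n(R)$ is strongly weakly nil-clean for some $n \geq 3$; (iv) ${\rm T}_n(R)$ is GSWNC for some $n \geq 3$.
   Context: All rings are associative with identity. ${\rm T}_n(R)$ denotes the ring of $n\times n$ upper triangular matrices over $R$. An element $a$ of a ring is strongly nil-clean if $a = e + q$ with $e$ idempotent, $q$ nilpotent and $eq = qe$; it is strongly weakly nil-clean if there exist an idempotent $e$ and a nilpotent $q$ with $eq = qe$ such that $a = q + e$ or $a = q - e$. A ring is strongly nil-clean (resp. strongly weakly nil-clean) if all its elements are. A ring is GSWNC if every non-invertible element is strongly weakly nil-clean. *)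

theory Defs
  imports "HOL-Algebra.Ring"
begin

definition idem :: "('a, 'm) ring_scheme \<Rightarrow> 'a \<Rightarrow> bool" where
  "idem R e \<longleftrightarrow> e \<in> carrier R \<and> e \<otimes>\<^bsub>R\<^esub> e = e"

definition nilp :: "('a, 'm) ring_scheme \<Rightarrow> 'a \<Rightarrow> bool" where
  "nilp R q \<longleftrightarrow> q \<in> carrier R \<and> (\<exists>k::nat. q [^]\<^bsub>R\<^esub> k = \<zero>\<^bsub>R\<^esub>)"

definition strongly_nil_clean_elem :: "('a, 'm) ring_scheme \<Rightarrow> 'a \<Rightarrow> bool" where
  "strongly_nil_clean_elem R a \<longleftrightarrow>
     (\<exists>e q. idem R e \<and> nilp R q \<and> e \<otimes>\<^bsub>R\<^esub> q = q \<otimes>\<^bsub>R\<^esub> e \<and> a = e \<oplus>\<^bsub>R\<^esub> q)"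

definition strongly_weakly_nil_clean_elem :: "('a, 'm) ring_scheme \<Rightarrow> 'a \<Rightarrow> bool" where
  "strongly_weakly_nil_clean_elem R a \<longleftrightarrow>
     (\<exists>e q. idem R e \<and> nilp R q \<and> e \<otimes>\<^bsub>R\<^esub> q = q \<otimes>\<^bsub>R\<^esub> e \<and>
        (a = q \<oplus>\<^bsub>R\<^esub> e \<or> a = q \<ominus>\<^bsub>R\<^esub> e))"

definition strongly_nil_clean :: "('a, 'm) ring_scheme \<Rightarrow> bool" where
  "strongly_nil_clean R \<longleftrightarrow> (\<forall>a \<in> carrier R. strongly_nil_clean_elem R a)"

definition strongly_weakly_nil_clean :: "('a, 'm) ring_scheme \<Rightarrow> bool" where
  "strongly_weakly_nil_clean R \<longleftrightarrow> (\<forall>a \<in> carrier R. strongly_weakly_nil_clean_elem R a)"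

definition GSWNC :: "('a, 'm) ring_scheme \<Rightarrow> bool" where
  "GSWNC R \<longleftrightarrow> (\<forall>a \<in> carrier R - Units R. strongly_weakly_nil_clean_elem R a)"

text \<open>The ring T_n(R) of n x n upper triangular matrices over R, with rows/columns
  indexed by 0..n-1; matrices are functions vanishing outside the upper triangle.\<close>

definition upper_tri :: "nat \<Rightarrow> ('a, 'm) ring_scheme \<Rightarrow> (nat \<Rightarrow> nat \<Rightarrow> 'a) ring" where
  "upper_tri n R =
     \<lparr> carrier = {A. (\<forall>i j. A i j \<in> carrier R) \<and>
                     (\<forall>i j. \<not> (i \<le> j \<and> j < n) \<longrightarrow> A i j = \<zero>\<^bsub>R\<^esub>)},
       mult = (\<lambda>A B i j. if i < n \<and> j < n
                          then finsum R (\<lambda>k. A i k \<otimes>\<^bsub>R\<^esub> B k j) {..<n}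
                          else \<zero>\<^bsub>R\<^esub>),
       one = (\<lambda>i j. if i = j \<and> i < n then \<one>\<^bsub>R\<^esub> else \<zero>\<^bsub>R\<^esub>),
       zero = (\<lambda>i j. \<zero>\<^bsub>R\<^esub>),
       add = (\<lambda>A B i j. A i j \<oplus>\<^bsub>R\<^esub> B i j) \<rparr>"

end

theory Submission
  imports Defs "HOL-Algebra.Subrings"
begin

text \<open>
  An element \<open>a\<close> is strongly nil-clean iff \<open>a - a\<^sup>2\<close> is nilpotent. One direction is a
  computation with commuting elements; for the other, Newton's iteration \<open>e \<mapsto> 3e\<^sup>2 - 2e\<^sup>3\<close>
  started at \<open>a\<close> squares the defect \<open>e - e\<^sup>2\<close> at each step and so reaches an idempotent
  congruent to \<open>a\<close> modulo the nilpotent \<open>a - a\<^sup>2\<close>. Both computations happen in a commutative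
  subring, the double commutant of the commuting elements involved.

  The diagonal of \<open>A - A\<^sup>2\<close> in \<open>T\<^sub>n(R)\<close> consists of the \<open>a\<^sub>i\<^sub>i - a\<^sub>i\<^sub>i\<^sup>2\<close>, and an upper triangular
  matrix with nilpotent diagonal is nilpotent; so \<open>T\<^sub>n(R)\<close> is strongly nil-clean when \<open>R\<close> is.
  Conversely, for \<open>n \<ge> 3\<close> the matrix \<open>diag(a, 1, 0, \<dots>)\<close> is not a unit, and a decomposition
  \<open>Q \<plusminus> E\<close> of it restricts to the diagonal entries. With the sign \<open>+\<close>, \<open>a\<close> is strongly
  nil-clean at once. With the sign \<open>-\<close>, the entry \<open>1 = q - e\<close> forces \<open>q = 2\<close>, so \<open>2\<close> is
  nilpotent and \<open>a = q - e = e + (q - 2e)\<close> is strongly nil-clean again.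
\<close>

lemma (in abelian_monoid) finsum_swap:
  assumes "finite A" "finite B" "\<And>i j. i \<in> A \<Longrightarrow> j \<in> B \<Longrightarrow> f i j \<in> carrier G"
  shows "(\<Oplus>i\<in>A. \<Oplus>j\<in>B. f i j) = (\<Oplus>j\<in>B. \<Oplus>i\<in>A. f i j)"
  using assms
proof (induction A rule: finite_induct)
  case empty
  then show ?case by (simp add: finsum_zero)
next
  case (insert a A)
  have "(\<Oplus>i\<in>insert a A. \<Oplus>j\<in>B. f i j) = (\<Oplus>j\<in>B. f a j) \<oplus> (\<Oplus>j\<in>B. \<Oplus>i\<in>A. f i j)"
    using insert by (simp add: finsum_insert finsum_closed)
  also have "\<dots> = (\<Oplus>j\<in>B. f a j \<oplus> (\<Oplus>i\<in>A. f i j))"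
    using insert by (intro finsum_addf[symmetric]) (auto intro: finsum_closed)
  also have "\<dots> = (\<Oplus>j\<in>B. \<Oplus>i\<in>insert a A. f i j)"
    using insert by (intro finsum_cong) (auto simp: finsum_insert intro: finsum_closed)
  finally show ?case .
qed

lemma (in abelian_monoid) finsum_eq_single:
  assumes "i \<in> A" "finite A" "f \<in> A \<rightarrow> carrier G" "\<And>k. k \<in> A \<Longrightarrow> k \<noteq> i \<Longrightarrow> f k = \<zero>"
  shows "finsum G f A = f i"
proof -
  have "finsum G f A = (\<Oplus>j\<in>A. if i = j then f j else \<zero>)"
    using assms by (intro finsum_cong) (auto simp: simp_implies_def)
  also have "\<dots> = f i"
    using finsum_singleton[OF assms(1-3)] .
  finally show ?thesis .
qed

context ring begin

lemma idem_zero: "idem R \<zero>"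
  by (simp add: idem_def)

lemma nilp_zero: "nilp R \<zero>"
  unfolding nilp_def by (auto intro: exI[of _ 1])

lemma strongly_nil_clean_elem_zero: "strongly_nil_clean_elem R \<zero>"
  unfolding strongly_nil_clean_elem_def using idem_zero nilp_zero by force

lemma strongly_nil_clean_elem_def':
  "strongly_nil_clean_elem R a \<longleftrightarrow>
     (\<exists>e q. idem R e \<and> nilp R q \<and> e \<otimes> q = q \<otimes> e \<and> a = q \<oplus> e)"
  unfolding strongly_nil_clean_elem_def idem_def nilp_def by (metis a_comm)

lemma strongly_weakly_nil_clean_elem_if_strongly_nil_clean_elem:
  "strongly_nil_clean_elem R a \<Longrightarrow> strongly_weakly_nil_clean_elem R a"
  unfolding strongly_nil_clean_elem_def' strongly_weakly_nil_clean_elem_def by blast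

lemma strongly_weakly_nil_clean_if_strongly_nil_clean:
  "strongly_nil_clean R \<Longrightarrow> strongly_weakly_nil_clean R"
  unfolding strongly_nil_clean_def strongly_weakly_nil_clean_def
  using strongly_weakly_nil_clean_elem_if_strongly_nil_clean_elem by blast

lemma nat_pow_eq_zero_mono:
  assumes "x \<in> carrier R" "x [^] k = \<zero>" "k \<le> l"
  shows "x [^] (l::nat) = \<zero>"
proof -
  have "x [^] l = x [^] k \<otimes> x [^] (l - k)"
    using assms(1,3) nat_pow_mult[of x k "l - k"] by simp
  then show ?thesis
    using assms by simp
qed

lemma nilp_common_exponent:
  assumes "finite I" "\<And>i. i \<in> I \<Longrightarrow> nilp R (f i)"
  shows "\<exists>k::nat. \<forall>i\<in>I. f i [^] k = \<zero>"
proof -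
  obtain K where K: "\<And>i. i \<in> I \<Longrightarrow> f i [^] (K i :: nat) = \<zero>"
    using assms(2) unfolding nilp_def by metis
  have "f i [^] sum K I = \<zero>" if "i \<in> I" for i
    using nat_pow_eq_zero_mono[OF _ K member_le_sum[of i I K]] assms that
    by (simp add: nilp_def)
  then show ?thesis by blast
qed

lemma nilp_mult_commuting:
  assumes "nilp R x" "y \<in> carrier R" "x \<otimes> y = y \<otimes> x"
  shows "nilp R (x \<otimes> y)"
proof -
  obtain k where "x \<in> carrier R" "x [^] (k::nat) = \<zero>"
    using assms(1) by (auto simp: nilp_def)
  then show ?thesis
    using assms(2,3) pow_mult_distrib[of x y k] by (auto simp: nilp_def)
qed

lemma nilp_fixed_point_eq_zero:
  assumes "nilp R q" "y \<in> carrier R" "q \<otimes> y = y"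
  shows "y = \<zero>"
proof -
  obtain k where q: "q \<in> carrier R" and qk: "q [^] (k::nat) = \<zero>"
    using assms(1) by (auto simp: nilp_def)
  have "q [^] (j::nat) \<otimes> y = y" for j
  proof (induction j)
    case (Suc j)
    then show ?case
      using q assms(2,3) by (simp add: m_assoc)
  qed (use assms(2) in simp)
  from this[of k] show ?thesis
    using qk assms(2) by simp
qed

end

section \<open>Double commutants\<close>

definition commutant :: "('a, 'b) monoid_scheme \<Rightarrow> 'a set \<Rightarrow> 'a set" where
  "commutant R X = {z \<in> carrier R. \<forall>x\<in>X. z \<otimes>\<^bsub>R\<^esub> x = x \<otimes>\<^bsub>R\<^esub> z}"

context ring begin

lemma commutant_subring:
  assumes "X \<subseteq> carrier R"
  shows "subring (commutant R X) R"
proof (rule subringI)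
  fix h assume "h \<in> commutant R X"
  then show "\<ominus> h \<in> commutant R X"
    using assms by (auto simp: commutant_def r_minus l_minus subset_iff)
next
  fix h1 h2 assume h: "h1 \<in> commutant R X" "h2 \<in> commutant R X"
  then show "h1 \<otimes> h2 \<in> commutant R X"
    using assms by (auto simp: commutant_def subset_iff) (metis m_assoc)
  show "h1 \<oplus> h2 \<in> commutant R X"
    using h assms by (auto simp: commutant_def l_distr r_distr subset_iff)
qed (use assms in \<open>auto simp: commutant_def subset_iff\<close>)

lemma subset_bicommutant: "X \<subseteq> carrier R \<Longrightarrow> X \<subseteq> commutant R (commutant R X)"
  by (auto simp: commutant_def)

text \<open>A commuting set lies in its commutant, so its double commutant lies in its commutant
  as well and hence commutes with itself.\<close>

lemma bicommutant_subcring: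
  assumes X: "X \<subseteq> carrier R" and comm: "\<And>x y. x \<in> X \<Longrightarrow> y \<in> X \<Longrightarrow> x \<otimes> y = y \<otimes> x"
  shows "subcring (commutant R (commutant R X)) R"
proof (rule subcringI)
  have "commutant R X \<subseteq> carrier R"
    by (auto simp: commutant_def)
  then show "subring (commutant R (commutant R X)) R"
    by (rule commutant_subring)
  have "X \<subseteq> commutant R X"
    using X comm by (auto simp: commutant_def)
  then have "commutant R (commutant R X) \<subseteq> commutant R X"
    by (auto simp: commutant_def)
  then show "h1 \<otimes> h2 = h2 \<otimes> h1"
    if "h1 \<in> commutant R (commutant R X)" "h2 \<in> commutant R (commutant R X)" for h1 h2
    using that by (auto simp: commutant_def)
qed

lemma commuting_pair_in_subcring:
  assumes "x \<in> carrier R" "y \<in> carrier R" "x \<otimes> y = y \<otimes> x"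
  obtains C where "x \<in> C" "y \<in> C" "subring C R" "cring (R\<lparr>carrier := C\<rparr>)"
proof
  let ?C = "commutant R (commutant R {x, y})"
  have "subcring ?C R"
    using assms by (intro bicommutant_subcring) auto
  then show "subring ?C R" "cring (R\<lparr>carrier := ?C\<rparr>)"
    using subcring_iff subcring.axioms(1) subringE(1) by blast+
  show "x \<in> ?C" "y \<in> ?C"
    using subset_bicommutant[of "{x, y}"] assms by auto
qed

lemma subring_a_minus:
  assumes "subring C R" "x \<in> C" "y \<in> C"
  shows "x \<ominus>\<^bsub>R\<lparr>carrier := C\<rparr>\<^esub> y = x \<ominus> y"
proof -
  interpret S: ring "R\<lparr>carrier := C\<rparr>"
    using subring_is_ring[OF assms(1)] .
  have "\<ominus> y \<in> C" "\<ominus> y \<oplus> y = \<zero>"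
    using assms subringE(1,5)[OF assms(1)] by (auto simp: l_neg)
  then have "\<ominus>\<^bsub>R\<lparr>carrier := C\<rparr>\<^esub> y = \<ominus> y"
    using S.minus_equality[of "\<ominus> y" y] assms(3) by simp
  then show ?thesis
    by (simp add: a_minus_def)
qed

lemma subring_nilp_iff:
  assumes "subring C R" "x \<in> C"
  shows "nilp (R\<lparr>carrier := C\<rparr>) x \<longleftrightarrow> nilp R x"
  using assms subringE(1)[OF assms(1)] by (auto simp: nilp_def nat_pow_def)

lemma subring_idem_iff:
  assumes "subring C R" "x \<in> C"
  shows "idem (R\<lparr>carrier := C\<rparr>) x \<longleftrightarrow> idem R x"
  using assms subringE(1)[OF assms(1)] by (auto simp: idem_def)

lemma strongly_nil_clean_elem_if_subring:
  assumes "subring C R" "strongly_nil_clean_elem (R\<lparr>carrier := C\<rparr>) a"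
  shows "strongly_nil_clean_elem R a"
proof -
  obtain e q where e: "idem (R\<lparr>carrier := C\<rparr>) e" and q: "nilp (R\<lparr>carrier := C\<rparr>) q"
    and "e \<otimes> q = q \<otimes> e" "a = e \<oplus> q"
    using assms(2) unfolding strongly_nil_clean_elem_def by auto
  moreover have "e \<in> C" "q \<in> C"
    using e q by (auto simp: idem_def nilp_def)
  ultimately show ?thesis
    using subring_idem_iff subring_nilp_iff assms(1) unfolding strongly_nil_clean_elem_def by blast
qed

end

section \<open>Lifting idempotents modulo nilpotents\<close>

text \<open>Newton's iteration for the equation \<open>e\<^sup>2 = e\<close>; it is \<open>e \<mapsto> 3e\<^sup>2 - 2e\<^sup>3\<close>.\<close>

definition idem_newton :: "('a, 'b) ring_scheme \<Rightarrow> 'a \<Rightarrow> 'a" where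
  "idem_newton R e = e \<oplus>\<^bsub>R\<^esub> (e \<ominus>\<^bsub>R\<^esub> e \<otimes>\<^bsub>R\<^esub> e) \<otimes>\<^bsub>R\<^esub> (e \<oplus>\<^bsub>R\<^esub> e \<ominus>\<^bsub>R\<^esub> \<one>\<^bsub>R\<^esub>)"

context cring begin

lemma nilp_mult: "nilp R x \<Longrightarrow> y \<in> carrier R \<Longrightarrow> nilp R (x \<otimes> y)"
  by (rule nilp_mult_commuting) (auto simp: nilp_def m_comm)

lemma add_pow_eq_pow_add_multiple:
  assumes u: "u \<in> carrier R" and v: "v \<in> carrier R"
  shows "\<exists>w\<in>carrier R. (u \<oplus> v) [^] (k::nat) = v [^] k \<oplus> u \<otimes> w"
proof (induction k)
  case 0
  show ?case
    using u by (intro bexI[of _ \<zero>]) auto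
next
  case (Suc k)
  then obtain w where w: "w \<in> carrier R" and eq: "(u \<oplus> v) [^] k = v [^] k \<oplus> u \<otimes> w"
    by blast
  define V where "V = v [^] k"
  have V: "V \<in> carrier R"
    using v by (simp add: V_def)
  have "(u \<oplus> v) [^] Suc k = (V \<oplus> u \<otimes> w) \<otimes> (u \<oplus> v)"
    using eq by (simp add: V_def)
  also have "\<dots> = V \<otimes> v \<oplus> u \<otimes> (V \<oplus> w \<otimes> u \<oplus> w \<otimes> v)"
    using u v w V by algebra
  finally show ?case
    using u v w V by (auto simp: V_def)
qed

lemma nilp_add:
  assumes "nilp R x" "nilp R y"
  shows "nilp R (x \<oplus> y)"
proof -
  obtain p q where x: "x \<in> carrier R" "x [^] (p::nat) = \<zero>" and y: "y \<in> carrier R" "y [^] (q::nat) = \<zero>"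
    using assms by (auto simp: nilp_def)
  obtain w where w: "w \<in> carrier R" and eq: "(x \<oplus> y) [^] q = y [^] q \<oplus> x \<otimes> w"
    using add_pow_eq_pow_add_multiple[OF x(1) y(1)] by blast
  have "(x \<oplus> y) [^] (q * p) = ((x \<oplus> y) [^] q) [^] p"
    using x y by (simp add: nat_pow_pow)
  also have "\<dots> = (x \<otimes> w) [^] p"
    using eq x y w by simp
  also have "\<dots> = \<zero>"
    using x w by (simp add: nat_pow_distrib)
  finally show ?thesis
    using x y by (auto simp: nilp_def)
qed

lemma idem_newton_defect:
  assumes e: "e \<in> carrier R"
  shows "idem_newton R e \<ominus> idem_newton R e \<otimes> idem_newton R e
    = (e \<ominus> e \<otimes> e) \<otimes> (e \<ominus> e \<otimes> e) \<otimes> (\<one> \<oplus> \<one> \<oplus> \<one> \<oplus> (\<one> \<oplus> \<one>) \<otimes> (\<one> \<oplus> \<one>) \<otimes> (e \<ominus> e \<otimes> e))"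
proof -
  define t where "t = e \<ominus> e \<otimes> e"
  define s where "s = e \<oplus> e \<ominus> \<one>"
  have t: "t \<in> carrier R" and s: "s \<in> carrier R"
    using e by (simp_all add: t_def s_def)
  have s_neg: "\<one> \<ominus> e \<ominus> e = \<ominus> s"
    unfolding s_def using e by algebra
  have ss: "s \<otimes> s = \<one> \<ominus> (\<one> \<oplus> \<one>) \<otimes> (\<one> \<oplus> \<one>) \<otimes> t"
    unfolding s_def t_def using e by algebra
  have "idem_newton R e \<ominus> idem_newton R e \<otimes> idem_newton R e
      = e \<oplus> t \<otimes> s \<ominus> (e \<oplus> t \<otimes> s) \<otimes> (e \<oplus> t \<otimes> s)"
    by (simp add: idem_newton_def t_def s_def)
  also have "\<dots> = (e \<ominus> e \<otimes> e) \<oplus> t \<otimes> s \<otimes> (\<one> \<ominus> e \<ominus> e) \<ominus> t \<otimes> t \<otimes> (s \<otimes> s)"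
    using e t s by algebra
  also have "\<dots> = t \<ominus> t \<otimes> (s \<otimes> s) \<ominus> t \<otimes> t \<otimes> (s \<otimes> s)"
    unfolding s_neg t_def[symmetric] using t s by algebra
  also have "\<dots> = t \<otimes> t \<otimes> (\<one> \<oplus> \<one> \<oplus> \<one> \<oplus> (\<one> \<oplus> \<one>) \<otimes> (\<one> \<oplus> \<one>) \<otimes> t)"
    unfolding ss using t by algebra
  finally show ?thesis
    unfolding t_def .
qed

lemma idem_newton_iterate:
  assumes a: "a \<in> carrier R"
  defines "x \<equiv> a \<ominus> a \<otimes> a"
  shows "\<exists>c\<in>carrier R. \<exists>d\<in>carrier R.
    (idem_newton R ^^ k) a \<ominus> (idem_newton R ^^ k) a \<otimes> (idem_newton R ^^ k) a = x [^] (2 ^ k :: nat) \<otimes> c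
    \<and> (idem_newton R ^^ k) a = a \<oplus> x \<otimes> d"
proof (induction k)
  case 0
  have "a \<ominus> a \<otimes> a = x [^] (1::nat) \<otimes> \<one>" "a = a \<oplus> x \<otimes> \<zero>"
    using a by (simp_all add: x_def)
  then show ?case
    by force
next
  case (Suc k)
  define e where "e = (idem_newton R ^^ k) a"
  have x: "x \<in> carrier R"
    using a by (simp add: x_def)
  from Suc obtain c d where c: "c \<in> carrier R" and d: "d \<in> carrier R"
    and defect: "e \<ominus> e \<otimes> e = x [^] (2 ^ k :: nat) \<otimes> c" and cong: "e = a \<oplus> x \<otimes> d"
    unfolding e_def by blast
  have e: "e \<in> carrier R"
    using cong a x d by simp
  define X where "X = x [^] (2 ^ k :: nat)"
  define y where "y = x [^] (2 ^ k - 1 :: nat)"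
  have X: "X \<in> carrier R" and y: "y \<in> carrier R"
    using x by (simp_all add: X_def y_def)
  have Xy: "X = x \<otimes> y"
    using x nat_pow_Suc2[of x "2 ^ k - 1"] by (simp add: X_def y_def)
  have XX: "X \<otimes> X = x [^] (2 ^ Suc k :: nat)"
    using x by (simp add: X_def nat_pow_mult mult_2)
  define T where "T = \<one> \<oplus> \<one> \<oplus> \<one> \<oplus> (\<one> \<oplus> \<one>) \<otimes> (\<one> \<oplus> \<one>) \<otimes> (X \<otimes> c)"
  have T: "T \<in> carrier R"
    using X c by (simp add: T_def)
  have "idem_newton R e \<ominus> idem_newton R e \<otimes> idem_newton R e = (X \<otimes> c) \<otimes> (X \<otimes> c) \<otimes> T"
    unfolding idem_newton_defect[OF e] defect X_def[symmetric] T_def ..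
  also have "\<dots> = (X \<otimes> X) \<otimes> (c \<otimes> c \<otimes> T)"
    using X c T by algebra
  finally have defect': "idem_newton R e \<ominus> idem_newton R e \<otimes> idem_newton R e
      = x [^] (2 ^ Suc k :: nat) \<otimes> (c \<otimes> c \<otimes> T)"
    unfolding XX .
  have "idem_newton R e = (a \<oplus> x \<otimes> d) \<oplus> (x \<otimes> y \<otimes> c) \<otimes> (e \<oplus> e \<ominus> \<one>)"
    unfolding idem_newton_def defect X_def[symmetric] Xy using cong by simp
  also have "\<dots> = a \<oplus> x \<otimes> (d \<oplus> y \<otimes> c \<otimes> (e \<oplus> e \<ominus> \<one>))"
    using a x d y c e by algebra
  finally have cong': "idem_newton R e = a \<oplus> x \<otimes> (d \<oplus> y \<otimes> c \<otimes> (e \<oplus> e \<ominus> \<one>))" .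
  show ?case
    using defect' cong' c d y T e by (auto simp: e_def)
qed

lemma strongly_nil_clean_elem_if_nilp_minus_square:
  assumes a: "a \<in> carrier R" and nilp: "nilp R (a \<ominus> a \<otimes> a)"
  shows "strongly_nil_clean_elem R a"
proof -
  define x where "x = a \<ominus> a \<otimes> a"
  obtain m where x: "x \<in> carrier R" and xm: "x [^] (m::nat) = \<zero>"
    using nilp by (auto simp: nilp_def x_def)
  define e where "e = (idem_newton R ^^ m) a"
  obtain c d where c: "c \<in> carrier R" and d: "d \<in> carrier R"
    and defect: "e \<ominus> e \<otimes> e = x [^] (2 ^ m :: nat) \<otimes> c" and cong: "e = a \<oplus> x \<otimes> d"
    using idem_newton_iterate[OF a, of m] unfolding e_def x_def by blast
  have e: "e \<in> carrier R"
    using cong a x d by simp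
  have "x [^] (2 ^ m :: nat) = \<zero>"
    using nat_pow_eq_zero_mono[OF x xm] by simp
  then have "idem R e"
    using defect c e by (simp add: idem_def)
  moreover have "a \<ominus> e = x \<otimes> (\<ominus> d)"
    unfolding cong using a x d by algebra
  then have "nilp R (a \<ominus> e)"
    using nilp_mult[of x "\<ominus> d"] nilp d by (simp add: x_def)
  moreover have "a = e \<oplus> (a \<ominus> e)"
    using a e by algebra
  ultimately show ?thesis
    unfolding strongly_nil_clean_elem_def using a e m_comm by (metis minus_closed)
qed

lemma nilp_minus_square_if_idem_add_nilp:
  assumes e: "idem R e" and q: "nilp R q"
  shows "nilp R ((e \<oplus> q) \<ominus> (e \<oplus> q) \<otimes> (e \<oplus> q))"
proof -
  have ec: "e \<in> carrier R" and ee: "e \<otimes> e = e" and qc: "q \<in> carrier R"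
    using e q by (auto simp: idem_def nilp_def)
  have "(e \<oplus> q) \<ominus> (e \<oplus> q) \<otimes> (e \<oplus> q) = (e \<ominus> e \<otimes> e) \<oplus> q \<otimes> (\<one> \<ominus> e \<ominus> e \<ominus> q)"
    using ec qc by algebra
  also have "\<dots> = q \<otimes> (\<one> \<ominus> e \<ominus> e \<ominus> q)"
    using ec qc by (simp add: ee)
  finally show ?thesis
    using nilp_mult[OF q] ec qc by simp
qed

lemma eq_two_if_nilp_minus_idem_eq_one:
  assumes e: "idem R e" and q: "nilp R q" and one: "q \<ominus> e = \<one>"
  shows "q = \<one> \<oplus> \<one>"
proof -
  have ec: "e \<in> carrier R" and ee: "e \<otimes> e = e" and qc: "q \<in> carrier R"
    using e q by (auto simp: idem_def nilp_def)
  have "e = q \<ominus> (q \<ominus> e)"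
    using ec qc by algebra
  then have e1: "e = q \<ominus> \<one>"
    using one by simp
  have "q \<otimes> (q \<ominus> (\<one> \<oplus> \<one>)) = (q \<ominus> \<one>) \<otimes> (q \<ominus> \<one>) \<ominus> \<one>"
    using qc by algebra
  also have "\<dots> = q \<ominus> (\<one> \<oplus> \<one>)"
    using ee qc unfolding e1 by algebra
  finally have "q \<ominus> (\<one> \<oplus> \<one>) = \<zero>"
    using nilp_fixed_point_eq_zero[OF q] qc by simp
  then show ?thesis
    using qc by simp
qed

lemma strongly_nil_clean_elem_nilp_minus_idem_if_nilp_two:
  assumes two: "nilp R (\<one> \<oplus> \<one>)" and e: "idem R e" and q: "nilp R q"
  shows "strongly_nil_clean_elem R (q \<ominus> e)"
proof -
  have ec: "e \<in> carrier R" and qc: "q \<in> carrier R"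
    using e q by (auto simp: idem_def nilp_def)
  have "nilp R (q \<oplus> (\<one> \<oplus> \<one>) \<otimes> (\<ominus> e))"
    using nilp_add[OF q nilp_mult[OF two]] ec by simp
  moreover have "q \<ominus> e = e \<oplus> (q \<oplus> (\<one> \<oplus> \<one>) \<otimes> (\<ominus> e))"
    using ec qc by algebra
  ultimately show ?thesis
    unfolding strongly_nil_clean_elem_def using e ec qc m_comm by (metis nilp_def)
qed

end

context ring begin

lemma strongly_nil_clean_elem_iff_nilp:
  assumes a: "a \<in> carrier R"
  shows "strongly_nil_clean_elem R a \<longleftrightarrow> nilp R (a \<ominus> a \<otimes> a)"
proof
  assume "strongly_nil_clean_elem R a"
  then obtain e q where e: "idem R e" and q: "nilp R q" and eq: "e \<otimes> q = q \<otimes> e"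
    and a_eq: "a = e \<oplus> q"
    unfolding strongly_nil_clean_elem_def by blast
  obtain C where C: "e \<in> C" "q \<in> C" "subring C R" and S: "cring (R\<lparr>carrier := C\<rparr>)"
    using commuting_pair_in_subcring[of e q] e q eq unfolding idem_def nilp_def by blast
  interpret S: cring "R\<lparr>carrier := C\<rparr>"
    by (rule S)
  have "a \<in> C" "a \<otimes> a \<in> C"
    using a_eq C subringE(6,7)[OF C(3)] by auto
  moreover have "nilp (R\<lparr>carrier := C\<rparr>) (a \<ominus>\<^bsub>R\<lparr>carrier := C\<rparr>\<^esub> a \<otimes> a)"
    using S.nilp_minus_square_if_idem_add_nilp[of e q] e q C
    by (simp add: a_eq subring_idem_iff subring_nilp_iff)
  ultimately show "nilp R (a \<ominus> a \<otimes> a)"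
    using subring_nilp_iff subring_a_minus C(3) subringE(5,7)[OF C(3)]
    by (metis a_minus_def)
next
  assume nilp: "nilp R (a \<ominus> a \<otimes> a)"
  obtain C where C: "a \<in> C" "subring C R" and S: "cring (R\<lparr>carrier := C\<rparr>)"
    using commuting_pair_in_subcring[of a a] a by blast
  interpret S: cring "R\<lparr>carrier := C\<rparr>"
    by (rule S)
  have aa: "a \<otimes> a \<in> C"
    using C subringE(6)[OF C(2)] by blast
  have "a \<ominus> a \<otimes> a \<in> C"
    using C aa subringE(5,7)[OF C(2)] by (simp add: a_minus_def)
  then have "nilp (R\<lparr>carrier := C\<rparr>) (a \<ominus>\<^bsub>R\<lparr>carrier := C\<rparr>\<^esub> a \<otimes> a)"
    using nilp subring_a_minus[OF C(2,1) aa] subring_nilp_iff[OF C(2)] by simp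
  then show "strongly_nil_clean_elem R a"
    using S.strongly_nil_clean_elem_if_nilp_minus_square C strongly_nil_clean_elem_if_subring
    by simp
qed

lemma nilp_two_if_one_eq_nilp_minus_idem:
  assumes e: "idem R e" and q: "nilp R q" and eq: "e \<otimes> q = q \<otimes> e" and one: "\<one> = q \<ominus> e"
  shows "nilp R (\<one> \<oplus> \<one>)"
proof -
  obtain C where C: "e \<in> C" "q \<in> C" "subring C R" and S: "cring (R\<lparr>carrier := C\<rparr>)"
    using commuting_pair_in_subcring[of e q] e q eq unfolding idem_def nilp_def by blast
  interpret S: cring "R\<lparr>carrier := C\<rparr>"
    by (rule S)
  have "q = \<one> \<oplus> \<one>"
    using S.eq_two_if_nilp_minus_idem_eq_one[of e q] e q C one
    by (simp add: subring_idem_iff subring_nilp_iff subring_a_minus)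
  then show ?thesis
    using q by simp
qed

lemma strongly_nil_clean_elem_nilp_minus_idem:
  assumes two: "nilp R (\<one> \<oplus> \<one>)" and e: "idem R e" and q: "nilp R q"
    and eq: "e \<otimes> q = q \<otimes> e"
  shows "strongly_nil_clean_elem R (q \<ominus> e)"
proof -
  obtain C where C: "e \<in> C" "q \<in> C" "subring C R" and S: "cring (R\<lparr>carrier := C\<rparr>)"
    using commuting_pair_in_subcring[of e q] e q eq unfolding idem_def nilp_def by blast
  interpret S: cring "R\<lparr>carrier := C\<rparr>"
    by (rule S)
  have "\<one> \<oplus> \<one> \<in> C"
    using subringE(3,7)[OF C(3)] by blast
  then have "strongly_nil_clean_elem (R\<lparr>carrier := C\<rparr>) (q \<ominus> e)"
    using S.strongly_nil_clean_elem_nilp_minus_idem_if_nilp_two[of e q] two e q C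
    by (simp add: subring_idem_iff subring_nilp_iff subring_a_minus)
  then show ?thesis
    using strongly_nil_clean_elem_if_subring C(3) by blast
qed

section \<open>Upper triangular matrices\<close>

abbreviation UT :: "nat \<Rightarrow> (nat \<Rightarrow> nat \<Rightarrow> 'a) ring" where
  "UT n \<equiv> upper_tri n R"

lemma upper_tri_carrier:
  "A \<in> carrier (UT n) \<longleftrightarrow>
     (\<forall>i j. A i j \<in> carrier R) \<and> (\<forall>i j. \<not> (i \<le> j \<and> j < n) \<longrightarrow> A i j = \<zero>)"
  by (simp add: upper_tri_def)

lemma upper_tri_mult:
  "(A \<otimes>\<^bsub>UT n\<^esub> B) i j = (if i < n \<and> j < n then (\<Oplus>k\<in>{..<n}. A i k \<otimes> B k j) else \<zero>)"
  by (simp add: upper_tri_def)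

lemma upper_tri_one: "\<one>\<^bsub>UT n\<^esub> i j = (if i = j \<and> i < n then \<one> else \<zero>)"
  by (simp add: upper_tri_def)

lemma upper_tri_zero: "\<zero>\<^bsub>UT n\<^esub> i j = \<zero>"
  by (simp add: upper_tri_def)

lemma upper_tri_add: "(A \<oplus>\<^bsub>UT n\<^esub> B) i j = A i j \<oplus> B i j"
  by (simp add: upper_tri_def)

lemma upper_tri_one_closed: "\<one>\<^bsub>UT n\<^esub> \<in> carrier (UT n)"
  by (simp add: upper_tri_carrier upper_tri_one)

lemma upper_tri_entry_closed: "A \<in> carrier (UT n) \<Longrightarrow> A i j \<in> carrier R"
  by (simp add: upper_tri_carrier)

lemma upper_tri_entry_eq_zero: "A \<in> carrier (UT n) \<Longrightarrow> \<not> (i \<le> j \<and> j < n) \<Longrightarrow> A i j = \<zero>"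
  by (simp add: upper_tri_carrier)

lemma upper_tri_eqI:
  assumes "A \<in> carrier (UT n)" "B \<in> carrier (UT n)" "\<And>i j. i < n \<Longrightarrow> j < n \<Longrightarrow> A i j = B i j"
  shows "A = B"
proof (intro ext)
  fix i j
  show "A i j = B i j"
    using assms upper_tri_entry_eq_zero[OF assms(1), of i j] upper_tri_entry_eq_zero[OF assms(2), of i j]
    by (cases "i < n \<and> j < n") auto
qed

lemma upper_tri_mult_closed:
  assumes A: "A \<in> carrier (UT n)" and B: "B \<in> carrier (UT n)"
  shows "A \<otimes>\<^bsub>UT n\<^esub> B \<in> carrier (UT n)"
proof -
  have "(A \<otimes>\<^bsub>UT n\<^esub> B) i j = \<zero>" if "j < i" for i j
  proof -
    have "A i k \<otimes> B k j = \<zero>" for k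
      using A B that by (cases "k < i") (auto simp: upper_tri_entry_eq_zero upper_tri_entry_closed)
    then show ?thesis
      by (simp add: upper_tri_mult finsum_zero)
  qed
  then show ?thesis
    using upper_tri_entry_closed[OF A] upper_tri_entry_closed[OF B]
    by (auto simp: upper_tri_carrier upper_tri_mult not_le intro!: finsum_closed)
qed

lemma upper_tri_diag_mult:
  assumes A: "A \<in> carrier (UT n)" and B: "B \<in> carrier (UT n)" and i: "i < n"
  shows "(A \<otimes>\<^bsub>UT n\<^esub> B) i i = A i i \<otimes> B i i"
proof -
  have "(\<Oplus>k\<in>{..<n}. A i k \<otimes> B k i) = A i i \<otimes> B i i"
  proof (rule finsum_eq_single)
    fix k assume "k \<in> {..<n}" "k \<noteq> i"
    then show "A i k \<otimes> B k i = \<zero>"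
      using A B by (cases "k < i") (auto simp: upper_tri_entry_eq_zero upper_tri_entry_closed)
  qed (use i A B in \<open>auto intro: upper_tri_entry_closed\<close>)
  then show ?thesis
    using i by (simp add: upper_tri_mult)
qed

lemma abelian_group_upper_tri: "abelian_group (UT n)"
proof (rule abelian_groupI)
  fix A assume A: "A \<in> carrier (UT n)"
  show "\<exists>B \<in> carrier (UT n). B \<oplus>\<^bsub>UT n\<^esub> A = \<zero>\<^bsub>UT n\<^esub>"
  proof
    show "(\<lambda>i j. \<ominus> A i j) \<in> carrier (UT n)"
      using A by (simp add: upper_tri_carrier)
    show "(\<lambda>i j. \<ominus> A i j) \<oplus>\<^bsub>UT n\<^esub> A = \<zero>\<^bsub>UT n\<^esub>"
      using upper_tri_entry_closed[OF A] by (simp add: fun_eq_iff upper_tri_add upper_tri_zero l_neg)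
  qed
qed (auto simp: upper_tri_carrier upper_tri_add upper_tri_zero a_assoc a_comm a_lcomm fun_eq_iff)

lemma monoid_upper_tri: "monoid (UT n)"
proof (rule monoidI)
  fix A B C
  assume A: "A \<in> carrier (UT n)" and B: "B \<in> carrier (UT n)" and C: "C \<in> carrier (UT n)"
  note [simp] = upper_tri_entry_closed[OF A] upper_tri_entry_closed[OF B] upper_tri_entry_closed[OF C]
  show "(A \<otimes>\<^bsub>UT n\<^esub> B) \<otimes>\<^bsub>UT n\<^esub> C = A \<otimes>\<^bsub>UT n\<^esub> (B \<otimes>\<^bsub>UT n\<^esub> C)"
  proof (rule upper_tri_eqI)
    fix i j assume "i < n" "j < n"
    then have "((A \<otimes>\<^bsub>UT n\<^esub> B) \<otimes>\<^bsub>UT n\<^esub> C) i j = (\<Oplus>k\<in>{..<n}. \<Oplus>l\<in>{..<n}. A i l \<otimes> B l k \<otimes> C k j)"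
      by (auto simp: upper_tri_mult finsum_ldistr intro!: finsum_cong)
    also have "\<dots> = (\<Oplus>l\<in>{..<n}. \<Oplus>k\<in>{..<n}. A i l \<otimes> B l k \<otimes> C k j)"
      by (rule finsum_swap) auto
    also have "\<dots> = (A \<otimes>\<^bsub>UT n\<^esub> (B \<otimes>\<^bsub>UT n\<^esub> C)) i j"
      using \<open>i < n\<close> \<open>j < n\<close>
      by (auto simp: upper_tri_mult finsum_rdistr m_assoc intro!: finsum_cong)
    finally show "((A \<otimes>\<^bsub>UT n\<^esub> B) \<otimes>\<^bsub>UT n\<^esub> C) i j = (A \<otimes>\<^bsub>UT n\<^esub> (B \<otimes>\<^bsub>UT n\<^esub> C)) i j" .
  qed (use A B C in \<open>auto intro: upper_tri_mult_closed\<close>)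
next
  fix A assume A: "A \<in> carrier (UT n)"
  note [simp] = upper_tri_entry_closed[OF A]
  show "\<one>\<^bsub>UT n\<^esub> \<otimes>\<^bsub>UT n\<^esub> A = A"
  proof (rule upper_tri_eqI)
    fix i j assume "i < n" "j < n"
    then show "(\<one>\<^bsub>UT n\<^esub> \<otimes>\<^bsub>UT n\<^esub> A) i j = A i j"
      using finsum_eq_single[of i "{..<n}" "\<lambda>k. \<one>\<^bsub>UT n\<^esub> i k \<otimes> A k j"]
      by (simp add: upper_tri_mult upper_tri_one)
  qed (use A in \<open>auto intro: upper_tri_mult_closed upper_tri_one_closed\<close>)
  show "A \<otimes>\<^bsub>UT n\<^esub> \<one>\<^bsub>UT n\<^esub> = A"
  proof (rule upper_tri_eqI)
    fix i j assume "i < n" "j < n"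
    then show "(A \<otimes>\<^bsub>UT n\<^esub> \<one>\<^bsub>UT n\<^esub>) i j = A i j"
      using finsum_eq_single[of j "{..<n}" "\<lambda>k. A i k \<otimes> \<one>\<^bsub>UT n\<^esub> k j"]
      by (simp add: upper_tri_mult upper_tri_one)
  qed (use A in \<open>auto intro: upper_tri_mult_closed upper_tri_one_closed\<close>)
qed (auto intro: upper_tri_mult_closed upper_tri_one_closed)

lemma ring_upper_tri: "ring (UT n)"
proof (rule ringI)
  fix A B C
  assume A: "A \<in> carrier (UT n)" and B: "B \<in> carrier (UT n)" and C: "C \<in> carrier (UT n)"
  note [simp] = upper_tri_entry_closed[OF A] upper_tri_entry_closed[OF B] upper_tri_entry_closed[OF C]
  have closed: "X \<oplus>\<^bsub>UT n\<^esub> Y \<in> carrier (UT n)" if "X \<in> carrier (UT n)" "Y \<in> carrier (UT n)" for X Y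
    using that by (simp add: upper_tri_carrier upper_tri_add)
  show "(A \<oplus>\<^bsub>UT n\<^esub> B) \<otimes>\<^bsub>UT n\<^esub> C = A \<otimes>\<^bsub>UT n\<^esub> C \<oplus>\<^bsub>UT n\<^esub> B \<otimes>\<^bsub>UT n\<^esub> C"
    by (rule upper_tri_eqI)
      (use A B C in \<open>auto intro: upper_tri_mult_closed closed
         simp: upper_tri_mult upper_tri_add l_distr finsum_addf\<close>)
  show "C \<otimes>\<^bsub>UT n\<^esub> (A \<oplus>\<^bsub>UT n\<^esub> B) = C \<otimes>\<^bsub>UT n\<^esub> A \<oplus>\<^bsub>UT n\<^esub> C \<otimes>\<^bsub>UT n\<^esub> B"
    by (rule upper_tri_eqI)
      (use A B C in \<open>auto intro: upper_tri_mult_closed closed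
         simp: upper_tri_mult upper_tri_add r_distr finsum_addf\<close>)
qed (rule abelian_group_upper_tri, rule monoid_upper_tri)

lemma upper_tri_minus:
  assumes A: "A \<in> carrier (UT n)" and B: "B \<in> carrier (UT n)"
  shows "(A \<ominus>\<^bsub>UT n\<^esub> B) i j = A i j \<ominus> B i j"
proof -
  interpret T: ring "UT n"
    by (rule ring_upper_tri)
  have "(\<lambda>i j. \<ominus> B i j) \<in> carrier (UT n)" "(\<lambda>i j. \<ominus> B i j) \<oplus>\<^bsub>UT n\<^esub> B = \<zero>\<^bsub>UT n\<^esub>"
    using B upper_tri_entry_closed[OF B]
    by (simp_all add: upper_tri_carrier fun_eq_iff upper_tri_add upper_tri_zero l_neg)
  then have "\<ominus>\<^bsub>UT n\<^esub> B = (\<lambda>i j. \<ominus> B i j)"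
    using T.minus_equality B by blast
  then show ?thesis
    by (simp add: a_minus_def upper_tri_add)
qed

lemma upper_tri_diag_pow:
  assumes A: "A \<in> carrier (UT n)" and i: "i < n"
  shows "(A [^]\<^bsub>UT n\<^esub> (k::nat)) i i = A i i [^] k"
proof (induction k)
  case (Suc k)
  have "A [^]\<^bsub>UT n\<^esub> k \<in> carrier (UT n)"
    using monoid.nat_pow_closed[OF monoid_upper_tri A] .
  then show ?case
    using upper_tri_diag_mult[OF _ A i] Suc by simp
qed (use i in \<open>simp add: upper_tri_one\<close>)

lemma upper_tri_pow_eq_zero_below:
  assumes M: "M \<in> carrier (UT n)" and diag: "\<And>i. i < n \<Longrightarrow> M i i = \<zero>" and "j < i + k"
  shows "(M [^]\<^bsub>UT n\<^esub> (k::nat)) i j = \<zero>"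
  using \<open>j < i + k\<close>
proof (induction k arbitrary: j)
  case 0
  then show ?case
    by (simp add: upper_tri_one)
next
  case (Suc k)
  have P: "M [^]\<^bsub>UT n\<^esub> k \<in> carrier (UT n)"
    using monoid.nat_pow_closed[OF monoid_upper_tri M] .
  have "(M [^]\<^bsub>UT n\<^esub> k) i l \<otimes> M l j = \<zero>" for l
  proof (cases "l < i + k")
    case True
    then show ?thesis
      using Suc.IH upper_tri_entry_closed[OF M] by simp
  next
    case False
    then have "M l j = \<zero>"
      using Suc.prems diag upper_tri_entry_eq_zero[OF M, of l j] by (cases "l = j") auto
    then show ?thesis
      using upper_tri_entry_closed[OF P] by simp
  qed
  then show ?case
    by (simp add: upper_tri_mult finsum_zero)
qed

lemma nilp_upper_tri_if_diag_nilp: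
  assumes A: "A \<in> carrier (UT n)" and diag: "\<And>i. i < n \<Longrightarrow> nilp R (A i i)"
  shows "nilp (UT n) A"
proof -
  interpret T: ring "UT n"
    by (rule ring_upper_tri)
  obtain p :: nat where p: "\<forall>i\<in>{..<n}. A i i [^] p = \<zero>"
    using nilp_common_exponent[of "{..<n}" "\<lambda>i. A i i"] diag by auto
  have P: "A [^]\<^bsub>UT n\<^esub> p \<in> carrier (UT n)"
    using A by simp
  have diag_zero: "(A [^]\<^bsub>UT n\<^esub> p) i i = \<zero>" if "i < n" for i
    using upper_tri_diag_pow[OF A that] p that by simp
  have "(A [^]\<^bsub>UT n\<^esub> p) [^]\<^bsub>UT n\<^esub> n = \<zero>\<^bsub>UT n\<^esub>"
  proof (rule upper_tri_eqI)
    fix i j assume "j < n"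
    then show "((A [^]\<^bsub>UT n\<^esub> p) [^]\<^bsub>UT n\<^esub> n) i j = \<zero>\<^bsub>UT n\<^esub> i j"
      using upper_tri_pow_eq_zero_below[OF P diag_zero] by (simp add: upper_tri_zero)
  qed (use P in simp_all)
  then show ?thesis
    using A by (auto simp: nilp_def T.nat_pow_pow)
qed

lemma upper_tri_not_Units:
  assumes nontrivial: "\<one> \<noteq> \<zero>" and A: "A \<in> carrier (UT n)" and i: "i < n" and Aii: "A i i = \<zero>"
  shows "A \<notin> Units (UT n)"
proof
  assume "A \<in> Units (UT n)"
  then obtain B where B: "B \<in> carrier (UT n)" and BA: "B \<otimes>\<^bsub>UT n\<^esub> A = \<one>\<^bsub>UT n\<^esub>"
    unfolding Units_def by blast
  have "\<one> = (B \<otimes>\<^bsub>UT n\<^esub> A) i i"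
    using i by (simp add: BA upper_tri_one)
  also have "\<dots> = \<zero>"
    using upper_tri_diag_mult[OF B A i] Aii upper_tri_entry_closed[OF B] by simp
  finally show False
    using nontrivial by simp
qed

lemma upper_tri_diag_idem: "idem (UT n) E \<Longrightarrow> i < n \<Longrightarrow> idem R (E i i)"
  using upper_tri_diag_mult[of E n E i] by (auto simp: idem_def upper_tri_entry_closed)

lemma upper_tri_diag_nilp: "nilp (UT n) Q \<Longrightarrow> i < n \<Longrightarrow> nilp R (Q i i)"
  unfolding nilp_def by (metis upper_tri_diag_pow upper_tri_entry_closed upper_tri_zero)

lemma strongly_nil_clean_upper_tri:
  assumes "strongly_nil_clean R"
  shows "strongly_nil_clean (UT n)"
  unfolding strongly_nil_clean_def
proof
  interpret T: ring "UT n"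
    by (rule ring_upper_tri)
  fix A assume A: "A \<in> carrier (UT n)"
  have AA: "A \<otimes>\<^bsub>UT n\<^esub> A \<in> carrier (UT n)"
    using A by simp
  have "nilp R ((A \<ominus>\<^bsub>UT n\<^esub> A \<otimes>\<^bsub>UT n\<^esub> A) i i)" if "i < n" for i
  proof -
    have "strongly_nil_clean_elem R (A i i)"
      using assms upper_tri_entry_closed[OF A] unfolding strongly_nil_clean_def by blast
    then show ?thesis
      using strongly_nil_clean_elem_iff_nilp upper_tri_entry_closed[OF A]
      by (simp add: upper_tri_minus[OF A AA] upper_tri_diag_mult[OF A A that])
  qed
  then have "nilp (UT n) (A \<ominus>\<^bsub>UT n\<^esub> A \<otimes>\<^bsub>UT n\<^esub> A)"
    using nilp_upper_tri_if_diag_nilp A AA by simp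
  then show "strongly_nil_clean_elem (UT n) A"
    using T.strongly_nil_clean_elem_iff_nilp[OF A] by simp
qed

lemma strongly_nil_clean_if_GSWNC_upper_tri:
  assumes n: "3 \<le> n" and gswnc: "GSWNC (UT n)"
  shows "strongly_nil_clean R"
  unfolding strongly_nil_clean_def
proof
  fix a assume a: "a \<in> carrier R"
  show "strongly_nil_clean_elem R a"
  proof (cases "\<one> = \<zero>")
    case True
    then show ?thesis
      using one_zeroD a strongly_nil_clean_elem_zero by auto
  next
    case False
    define A where "A = (\<lambda>(i::nat) (j::nat). if i = 0 \<and> j = 0 then a else if i = 1 \<and> j = 1 then \<one> else \<zero>)"
    have A: "A \<in> carrier (UT n)"
      using n a by (simp add: upper_tri_carrier A_def)
    have "A \<notin> Units (UT n)"
      using upper_tri_not_Units[OF False A, of 2] n by (simp add: A_def)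
    then obtain E Q where E: "idem (UT n) E" and Q: "nilp (UT n) Q" and EQ: "E \<otimes>\<^bsub>UT n\<^esub> Q = Q \<otimes>\<^bsub>UT n\<^esub> E"
      and decomp: "A = Q \<oplus>\<^bsub>UT n\<^esub> E \<or> A = Q \<ominus>\<^bsub>UT n\<^esub> E"
      using gswnc A unfolding GSWNC_def strongly_weakly_nil_clean_elem_def by blast
    have Ec: "E \<in> carrier (UT n)" and Qc: "Q \<in> carrier (UT n)"
      using E Q by (auto simp: idem_def nilp_def)
    have diag: "idem R (E i i)" "nilp R (Q i i)" "E i i \<otimes> Q i i = Q i i \<otimes> E i i" if "i < n" for i
      using upper_tri_diag_idem[OF E that] upper_tri_diag_nilp[OF Q that]
        upper_tri_diag_mult[OF Ec Qc that] upper_tri_diag_mult[OF Qc Ec that] EQ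
      by auto
    from decomp show ?thesis
    proof
      assume "A = Q \<oplus>\<^bsub>UT n\<^esub> E"
      then have "A 0 0 = Q 0 0 \<oplus> E 0 0"
        by (simp add: upper_tri_add)
      then show ?thesis
        using diag[of 0] n unfolding strongly_nil_clean_elem_def' by (auto simp: A_def)
    next
      assume "A = Q \<ominus>\<^bsub>UT n\<^esub> E"
      then have entry: "A i i = Q i i \<ominus> E i i" for i
        using upper_tri_minus[OF Qc Ec] by simp
      have "nilp R (\<one> \<oplus> \<one>)"
        using nilp_two_if_one_eq_nilp_minus_idem diag[of 1] entry[of 1] n by (simp add: A_def)
      then show ?thesis
        using strongly_nil_clean_elem_nilp_minus_idem diag[of 0] entry[of 0] n by (simp add: A_def)
    qed
  qed
qed

end

theorem proposition2p9:
  fixes R :: "('a, 'm) ring_scheme"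
  assumes "ring R"
  shows "(strongly_nil_clean R \<longleftrightarrow>
            (\<forall>n\<ge>1. strongly_weakly_nil_clean (upper_tri n R)))
       \<and> ((\<forall>n\<ge>1. strongly_weakly_nil_clean (upper_tri n R)) \<longleftrightarrow>
            (\<exists>n\<ge>3. strongly_weakly_nil_clean (upper_tri n R)))
       \<and> ((\<exists>n\<ge>3. strongly_weakly_nil_clean (upper_tri n R)) \<longleftrightarrow>
            (\<exists>n\<ge>3. GSWNC (upper_tri n R)))"
proof -
  interpret ring R
    by fact
  have i_ii: "strongly_nil_clean R \<Longrightarrow> strongly_weakly_nil_clean (upper_tri n R)" for n
    using ring.strongly_weakly_nil_clean_if_strongly_nil_clean[OF ring_upper_tri]
      strongly_nil_clean_upper_tri by blast
  have iii_iv: "strongly_weakly_nil_clean (upper_tri n R) \<Longrightarrow> GSWNC (upper_tri n R)" for n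
    unfolding strongly_weakly_nil_clean_def GSWNC_def by blast
  have iv_i: "\<exists>n\<ge>3. GSWNC (upper_tri n R) \<Longrightarrow> strongly_nil_clean R"
    using strongly_nil_clean_if_GSWNC_upper_tri by blast
  have ii_iii: "\<forall>n\<ge>1. strongly_weakly_nil_clean (upper_tri n R) \<Longrightarrow>
      \<exists>n\<ge>3. strongly_weakly_nil_clean (upper_tri n R)"
    by (intro exI[of _ 3]) simp
  show ?thesis
    using i_ii ii_iii iii_iv iv_i by blast
qed

end
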